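(* For every integer $n\ge 0$, \[ \sum_{k=0}^{n}(-4)^k\frac{\binom{n}{k}}{\binom{2k}{k}}\,k\,H_{2k} =\frac{n\{H_{n}-2H_{2n}\}}{(2n-1)(2n-3)}+\frac{n(20n^2-24n-1)}{(2n-1)^2(2n-3)^2}. \]
   Context: For an integer $m\ge 0$, $H_m$ denotes the $m$-th harmonic number: $H_0=0$ and $H_m=\sum_{j=1}^m \frac1j$ for $m\ge1$. $\binom{n}{k}$ is the usual binomial coefficient. *)

theory Defs
  imports "HOL-Analysis.Analysis"
begin

end

theory Submission
  imports Defs
begin

text \<open>Write \<open>w(n,k) = (-4)^k C(n,k) / C(2k,k)\<close> and \<open>S(n)\<close> for the sum. Both ratios
\<open>w(n,k+1)/w(n,k)\<close> and \<open>w(n+1,k)/w(n,k)\<close> are rational, so a Zeilberger-type certificate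
\<open>G(n,k) = w(n+1,k) (p(n,k) H\<^sub>2\<^sub>k + q(n,k))\<close> with rational \<open>p, q\<close> makes
\<open>c\<^sub>0(n) w(n,k) k H\<^sub>2\<^sub>k + c\<^sub>1(n) w(n+1,k) k H\<^sub>2\<^sub>k\<close> telescope in \<open>k\<close>.
Summing over \<open>k\<close> gives a first-order inhomogeneous recurrence for \<open>S(n)\<close>; the claimed closed
form satisfies the same recurrence and agrees with \<open>S(1)\<close>, and \<open>n = 0\<close> is trivial.\<close>

lemma gbinomial_Suc_eq_ratio:
  "of_nat (Suc k) * (a gchoose Suc k) = (a - of_nat k) * (a gchoose k :: 'a :: field_char_0)"
  by (simp only: gbinomial_absorption gbinomial_absorb_comp)

lemma central_binomial_Suc:
  "Suc k * (2 * Suc k choose Suc k) = 2 * (2 * k + 1) * (2 * k choose k)"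
proof -
  have "Suc k * (2 * Suc k choose Suc k) = Suc (Suc (2 * k)) * (Suc (2 * k) choose k)"
    using Suc_times_binomial[of k "Suc (2 * k)"] by simp
  also have "Suc (2 * k) choose k = Suc (2 * k) choose Suc k"
    using binomial_symmetric[of k "Suc (2 * k)"] by simp
  also have "Suc (Suc (2 * k)) * \<dots> = 2 * (Suc k * (Suc (2 * k) choose Suc k))"
    by simp
  also have "Suc k * (Suc (2 * k) choose Suc k) = Suc (2 * k) * (2 * k choose k)"
    by (rule Suc_times_binomial)
  finally show ?thesis by simp
qed

lemma recurrence_solution_unique:
  fixes f g :: "nat \<Rightarrow> 'a :: field"
  assumes f: "\<And>n. m \<le> n \<Longrightarrow> a n * f n + b n * f (Suc n) = c n"
    and g: "\<And>n. m \<le> n \<Longrightarrow> a n * g n + b n * g (Suc n) = c n"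
    and b: "\<And>n. m \<le> n \<Longrightarrow> b n \<noteq> 0"
    and start: "f m = g m"
    and "m \<le> n"
  shows "f n = g n"
  using \<open>m \<le> n\<close>
proof (induction n rule: dec_induct)
  case base
  show ?case by (rule start)
next
  case (step n)
  have "b n * f (Suc n) = b n * g (Suc n)"
    using f[OF step.hyps(1)] g[OF step.hyps(1)] step.IH by (metis add_left_cancel)
  then show ?case using b[OF step.hyps(1)] by simp
qed

lemma harm_double_Suc:
  "harm (2 * Suc k) = harm (2 * k) + 1 / (2 * real k + 1) + (1 / (2 * real k + 2) :: real)"
proof -
  have "2 * Suc k = Suc (Suc (2 * k))" by simp
  then show ?thesis by (simp add: harm_Suc inverse_eq_divide add_ac)
qed

lemma two_of_nat_neq_three: "2 * real n \<noteq> 3"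
proof
  assume "2 * real n = 3"
  then have "real (2 * n) = real (3 :: nat)" by simp
  then show False by (simp only: of_nat_eq_iff) presburger
qed

definition binom_weight :: "nat \<Rightarrow> nat \<Rightarrow> real" where
  "binom_weight n k = (-4) ^ k * (real (n choose k) / real (2 * k choose k))"

lemma binom_weight_Suc_right:
  "(2 * real k + 1) * binom_weight n (Suc k) = 2 * (real k - real n) * binom_weight n k"
proof -
  have top: "real (Suc k) * real (n choose Suc k) = (real n - real k) * real (n choose k)"
    using gbinomial_Suc_eq_ratio[of k "real n"] by (simp add: binomial_gbinomial)
  have central: "real (Suc k) * real (2 * Suc k choose Suc k) = 2 * (2 * real k + 1) * real (2 * k choose k)"
    using arg_cong[OF central_binomial_Suc[of k], of real]
    by (simp only: of_nat_mult of_nat_add of_nat_numeral of_nat_1)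
  have "real (n choose Suc k) / real (2 * Suc k choose Suc k)
      = (real (Suc k) * real (n choose Suc k)) / (real (Suc k) * real (2 * Suc k choose Suc k))"
    by (rule mult_divide_mult_cancel_left[symmetric]) simp
  also have "\<dots> = (real n - real k) * real (n choose k) / (2 * (2 * real k + 1) * real (2 * k choose k))"
    unfolding top central ..
  finally have ratio: "real (n choose Suc k) / real (2 * Suc k choose Suc k)
      = (real n - real k) * real (n choose k) / (2 * (2 * real k + 1) * real (2 * k choose k))" .
  have "2 * (2 * real k + 1) * real (2 * k choose k) \<noteq> 0" by simp
  then show ?thesis
    unfolding binom_weight_def ratio power_Suc by (simp add: field_simps)
qed

lemma binom_weight_Suc_left:
  "(real n + 1 - real k) * binom_weight (Suc n) k = (real n + 1) * binom_weight n k"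
proof -
  have "(real n + 1 - real k) * real (Suc n choose k) = (real n + 1) * real (n choose k)"
    using gbinomial_absorb_comp[of "1 + real n" k] by (simp add: binomial_gbinomial algebra_simps)
  moreover have "x * ((-4) ^ k * (y / real (2 * k choose k))) = (-4) ^ k / real (2 * k choose k) * (x * y)"
    for x y :: real
    by simp
  ultimately show ?thesis
    unfolding binom_weight_def by simp
qed

definition weighted_harm_sum :: "nat \<Rightarrow> real" where
  "weighted_harm_sum n = (\<Sum>k=0..n. binom_weight n k * real k * harm (2 * k))"

definition rec_coeff0 :: "real \<Rightarrow> real" where
  "rec_coeff0 N = - (2 * N - 1) * (2 * N - 3) / N"

definition rec_coeff1 :: "real \<Rightarrow> real" where
  "rec_coeff1 N = (2 * N + 1) * (2 * N - 1) / (N + 1)"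

definition rec_rhs :: "real \<Rightarrow> real" where
  "rec_rhs N = - 2 * (2 * N + 5) / ((2 * N - 3) * (2 * N + 1))"

definition cert_p :: "real \<Rightarrow> real \<Rightarrow> real" where
  "cert_p N K = - (2 * N - 1) * K * (K - 1) * (2 * K - 1) / (N * (N + 1))"

definition cert_q :: "real \<Rightarrow> real \<Rightarrow> real" where
  "cert_q N K = ((10 * N + 14 * N^2 + 4 * N^3) - (1 + 23 * N + 36 * N^2 + 20 * N^3) * K
     + (-3 + 8 * N + 36 * N^2 + 16 * N^3) * K^2 + (4 - 16 * N^2) * K^3)
     / (N * (N + 1) * (2 * N - 3) * (2 * N + 1))"

definition cert_G :: "nat \<Rightarrow> nat \<Rightarrow> real" where
  "cert_G n k = binom_weight (Suc n) k
     * (cert_p (real n) (real k) * harm (2 * k) + cert_q (real n) (real k))"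

text \<open>The telescoping relation divided by \<open>w(n+1,k) = W\<close>, with \<open>h = H\<^sub>2\<^sub>k\<close>; the two
fractions in \<open>W\<close> are the ratios \<open>w(n,k)/W\<close> and \<open>w(n+1,k+1)/W\<close>.\<close>

lemma certificate_identity:
  fixes W h K N :: real
  assumes "N > 0" "2 * N \<noteq> 3" "K \<ge> 0"
  shows "rec_coeff0 N * ((N + 1 - K) / (N + 1) * W * K * h) + rec_coeff1 N * (W * K * h)
    = (2 * (K - N - 1) / (2 * K + 1) * W)
        * (cert_p N (K + 1) * (h + 1 / (2 * K + 1) + 1 / (2 * K + 2)) + cert_q N (K + 1))
      - W * (cert_p N K * h + cert_q N K)"
proof -
  have "N + 1 \<noteq> 0" "2 * N - 3 \<noteq> 0" "2 * N + 1 \<noteq> 0" "2 * K + 1 \<noteq> 0" "2 * K + 2 \<noteq> 0"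
    using assms by auto
  with \<open>N > 0\<close> show ?thesis
    unfolding rec_coeff0_def rec_coeff1_def cert_p_def cert_q_def
    by (simp add: divide_simps) (simp add: algebra_simps power2_eq_square power3_eq_cube)
qed

lemma certificate_telescopes:
  assumes "n \<ge> 1"
  shows "rec_coeff0 (real n) * (binom_weight n k * real k * harm (2 * k))
       + rec_coeff1 (real n) * (binom_weight (Suc n) k * real k * harm (2 * k))
     = cert_G n (Suc k) - cert_G n k"
proof -
  have right: "binom_weight (Suc n) (Suc k)
      = 2 * (real k - real n - 1) / (2 * real k + 1) * binom_weight (Suc n) k"
    using binom_weight_Suc_right[of k "Suc n"] by (simp add: field_simps)
  have left: "binom_weight n k = (real n + 1 - real k) / (real n + 1) * binom_weight (Suc n) k"
    using binom_weight_Suc_left[of n k] by (simp add: field_simps)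
  have "real n > 0" using assms by simp
  from certificate_identity[OF this two_of_nat_neq_three, of "real k" "binom_weight (Suc n) k" "harm (2 * k)"]
  show ?thesis
    unfolding cert_G_def right left harm_double_Suc of_nat_Suc by (simp add: ac_simps)
qed

lemma weighted_harm_sum_recurrence:
  assumes n: "n \<ge> 1"
  shows "rec_coeff0 (real n) * weighted_harm_sum n + rec_coeff1 (real n) * weighted_harm_sum (Suc n)
    = rec_rhs (real n)"
proof -
  have vanish: "binom_weight n k = 0" if "n < k" for n k
    using that by (simp add: binom_weight_def binomial_eq_0)
  have sum_n: "weighted_harm_sum n = (\<Sum>k<Suc (Suc n). binom_weight n k * real k * harm (2 * k))"
    unfolding weighted_harm_sum_def by (simp add: atLeast0AtMost lessThan_Suc_atMost[symmetric] vanish)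
  have sum_Suc_n: "weighted_harm_sum (Suc n)
      = (\<Sum>k<Suc (Suc n). binom_weight (Suc n) k * real k * harm (2 * k))"
    unfolding weighted_harm_sum_def by (simp add: atLeast0AtMost lessThan_Suc_atMost[symmetric])
  have "rec_coeff0 (real n) * weighted_harm_sum n + rec_coeff1 (real n) * weighted_harm_sum (Suc n)
      = (\<Sum>k<Suc (Suc n). cert_G n (Suc k) - cert_G n k)"
    unfolding sum_n sum_Suc_n sum_distrib_left sum.distrib[symmetric]
    using certificate_telescopes[OF n] by simp
  also have "\<dots> = cert_G n (Suc (Suc n)) - cert_G n 0"
    by (rule sum_lessThan_telescope)
  also have "\<dots> = - cert_q (real n) 0"
    using vanish[of "Suc n" "Suc (Suc n)"]
    by (simp add: cert_G_def binom_weight_def[of _ 0] harm_expand(1))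
  also have "\<dots> = rec_rhs (real n)"
    using n two_of_nat_neq_three[of n]
    by (simp add: cert_q_def rec_rhs_def divide_simps) (simp add: algebra_simps power2_eq_square power3_eq_cube)
  finally show ?thesis .
qed

definition closed_form :: "real \<Rightarrow> real \<Rightarrow> real \<Rightarrow> real" where
  "closed_form N a b = N * (a - 2 * b) / ((2 * N - 1) * (2 * N - 3))
      + N * (20 * N^2 - 24 * N - 1) / ((2 * N - 1)^2 * (2 * N - 3)^2)"

lemma closed_form_recurrence:
  fixes N a b :: real
  assumes "N \<ge> 1" "2 * N \<noteq> 3"
  shows "rec_coeff0 N * closed_form N a b
      + rec_coeff1 N * closed_form (N + 1) (a + 1 / (N + 1)) (b + 1 / (2 * N + 1) + 1 / (2 * N + 2))
    = rec_rhs N"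
proof -
  have "N \<noteq> 0" "N + 1 \<noteq> 0" "2 * N - 3 \<noteq> 0" "2 * N + 1 \<noteq> 0" "2 * N - 1 \<noteq> 0"
    "2 * N + 2 \<noteq> 0" "2 * (N + 1) - 1 \<noteq> 0" "2 * (N + 1) - 3 \<noteq> 0"
    using assms by auto
  then show ?thesis
    unfolding rec_coeff0_def rec_coeff1_def rec_rhs_def closed_form_def
    by (simp add: divide_simps) (simp add: algebra_simps power2_eq_square power3_eq_cube)
qed

lemma weighted_harm_sum_eq_closed_form:
  assumes "n \<ge> 1"
  shows "weighted_harm_sum n = closed_form (real n) (harm n) (harm (2 * n))"
proof (rule recurrence_solution_unique[where m = 1
      and a = "\<lambda>n. rec_coeff0 (real n)" and b = "\<lambda>n. rec_coeff1 (real n)" and c = "\<lambda>n. rec_rhs (real n)"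
      and f = weighted_harm_sum and g = "\<lambda>n. closed_form (real n) (harm n) (harm (2 * n))",
      OF _ _ _ _ assms])
  show "rec_coeff0 (real m) * weighted_harm_sum m + rec_coeff1 (real m) * weighted_harm_sum (Suc m)
      = rec_rhs (real m)" if "1 \<le> m" for m
    using weighted_harm_sum_recurrence that .
next
  fix m :: nat
  assume "1 \<le> m"
  have "harm (Suc m) = harm m + 1 / (real m + 1)"
    by (simp add: harm_Suc inverse_eq_divide add.commute)
  with closed_form_recurrence[of "real m" "harm m" "harm (2 * m)"] \<open>1 \<le> m\<close> two_of_nat_neq_three
  show "rec_coeff0 (real m) * closed_form (real m) (harm m) (harm (2 * m))
      + rec_coeff1 (real m) * closed_form (real (Suc m)) (harm (Suc m)) (harm (2 * Suc m))
      = rec_rhs (real m)"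
    unfolding harm_double_Suc by (simp add: add_ac)
  show "rec_coeff1 (real m) \<noteq> 0"
    using \<open>1 \<le> m\<close> by (simp add: rec_coeff1_def)
next
  have "harm 2 = (3 / 2 :: real)"
    by (simp add: numeral_2_eq_2 harm_Suc harm_expand)
  then show "weighted_harm_sum 1 = closed_form (real 1) (harm 1) (harm (2 * 1))"
    by (simp add: weighted_harm_sum_def closed_form_def binom_weight_def harm_expand)
qed

theorem theorem2:
  fixes n :: nat
  shows "(\<Sum>k=0..n. (-4::real)^k * (real (n choose k) / real ((2*k) choose k)) * real k * harm (2*k))
    = real n * (harm n - 2 * harm (2*n)) / ((2 * real n - 1) * (2 * real n - 3))
      + real n * (20 * (real n)^2 - 24 * real n - 1) / ((2 * real n - 1)^2 * (2 * real n - 3)^2)"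
proof (cases "n = 0")
  case False
  then have "n \<ge> 1" by simp
  from weighted_harm_sum_eq_closed_form[OF this] show ?thesis
    unfolding weighted_harm_sum_def closed_form_def binom_weight_def by simp
qed simp

end
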